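(* Let $G$ be a finite abelian group with a free Brauer action on the Brauer graph $(\Gamma,\mathfrak o,m)$, let $(\overline\Gamma,\overline{\mathfrak o},\overline m)$ be the Brauer orbit graph, and let $G$ act on the quiver $Q_\Gamma$ by the induced action. Then the orbit quiver $\overline{Q_\Gamma}$ is isomorphic to the quiver $Q_{\overline\Gamma}$ of the Brauer orbit graph, via the map sending the orbit of $v_i$ to $v_{\bar i}$ and the orbit of the arrow corresponding to "$j$ is the successor of $i$ at $\mu$" to the arrow corresponding to "$\bar j$ is the successor of $\bar i$ at $\bar\mu$".
   Context: Brauer graphs. A Brauer graph $(\Gamma,\mathfrak o,m)$ is a finite connected graph $\Gamma$ (loops and multiple edges allowed) with vertex set $\Gamma_0$, edge set $\Gamma_1$ and at least one edge, together with a multiplicity function $m:\Gamma_0\to\mathbb Z_{\ge 1}$ and, for each vertex $\mu$, a cyclic ordering $\mathfrak o$ of the edges incident with $\mu$. A loop at $\mu$ occurs twice in the cyclic ordering at $\mu$; its two occurrences are regarded as two distinct elements of $\Gamma_1$ (each with its own successor). Edge $j$ is the successor of edge $i$ at $\mu$ if $j$ immediately follows $i$ in the cyclic ordering at $\mu$. The valency $\operatorname{val}(\mu)$ is the number of edges incident with $\mu$, loops counted twice; if $\operatorname{val}(\mu)=1$ the unique edge at $\mu$ is its own successor. An edge $i$ is truncated at its endpoint $\mu$ if $\operatorname{val}(\mu)=1$ and $m(\mu)=1$. The quiver $Q_\Gamma$: if $\Gamma$ is a single non-loop edge whose two endpoints have multiplicity $1$, $Q_\Gamma$ has one vertex and one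 loop. Otherwise $Q_\Gamma$ has a vertex $v_i$ for each $i\in\Gamma_1$ and an arrow $v_i\to v_j$ for each vertex $\mu$ and each pair $(i,j)$ with $j$ the successor of $i$ at $\mu$ and $i$ not truncated at $\mu$. Brauer actions. Let $G$ be a finite abelian group. A Brauer action of $G$ on $(\Gamma,\mathfrak o,m)$ is a faithful action $x\mapsto x^g$ of $G$ on the graph $\Gamma$ (on vertices and edges, compatible with incidence) such that for all $g\in G$: if $j$ is the successor of $i$ at $\mu$ then $j^g$ is the successor of $i^g$ at $\mu^g$, and $m(\mu^g)=m(\mu)$. It is a free Brauer action if $G$ acts freely on $\Gamma_1$. For a free Brauer action, the Brauer orbit graph $(\overline\Gamma,\overline{\mathfrak o},\overline m)$ has as vertices the $G$-orbits $\bar\mu$ of vertices and as edges the $G$-orbits $\bar i$ of edges, $\bar i$ being incident with $\bar\mu$ when $i$ is incident with $\mu$; its cyclic ordering is given by: $\bar j$ is the successor of $\bar i$ at $\bar\mu$ whenever $j$ is the successor of $i$ at $\mu$; and $\overline m(\bar\mu)=\operatorname{val}(\mu)m(\mu)/\operatorname{val}(\bar\mu)$. Induced action and orbit quiver. A free Brauer action induces a free action of $G$ on $Q_\Gamma$: $v_i^g=v_{i^g}$, and the arrow corresponding to "$j$ is the successor of $i$ at $\mu$" is sent to the arrow corresponding to "$j^g$ is the successor of $i^g$ at $\mu^g$". The orbit quiver $\overline{Q_\Gamma}$ has as vertices the $G$-orbits of vertices of $Q_\Gamma$ and as arrows the $G$-orbits of arrows, the orbit of $a:v\to w$ being an arrow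 from the orbit of $v$ to the orbit of $w$. *)

theory Defs
  imports "HOL-Algebra.Group"
begin

text \<open>A Brauer graph is given by a vertex set V, an edge set E and a set H of
edge-occurrences (half-edges): each half-edge h lies on the edge eo h and is
incident with the vertex vt h; each edge has exactly two occurrences (for a loop
at mu both occurrences lie at mu).  The cyclic ordering at mu is the
permutation sc (successor) of the half-edges at mu, required to be a single
cycle.  m is the multiplicity.\<close>

definition graph_adj :: "'h set \<Rightarrow> ('h \<Rightarrow> 'e) \<Rightarrow> ('h \<Rightarrow> 'v) \<Rightarrow> ('v \<times> 'v) set" where
  "graph_adj H eo vt = {(vt h, vt h') | h h'. h \<in> H \<and> h' \<in> H \<and> eo h = eo h'}"

definition brauer_graph ::
  "'v set \<Rightarrow> 'e set \<Rightarrow> 'h set \<Rightarrow> ('h \<Rightarrow> 'e) \<Rightarrow> ('h \<Rightarrow> 'v) \<Rightarrow> ('h \<Rightarrow> 'h) \<Rightarrow> ('v \<Rightarrow> nat) \<Rightarrow> bool" where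
  "brauer_graph V E H eo vt sc m \<longleftrightarrow>
     finite V \<and> finite E \<and> finite H \<and> E \<noteq> {} \<and>
     (\<forall>h\<in>H. eo h \<in> E \<and> vt h \<in> V) \<and>
     (\<forall>e\<in>E. card {h\<in>H. eo h = e} = 2) \<and>
     (\<forall>\<mu>\<in>V. \<forall>\<nu>\<in>V. (\<mu>, \<nu>) \<in> (graph_adj H eo vt)\<^sup>*) \<and>
     bij_betw sc H H \<and>
     (\<forall>h\<in>H. vt (sc h) = vt h) \<and>
     (\<forall>h\<in>H. \<forall>h'\<in>H. vt h = vt h' \<longrightarrow> (\<exists>n. (sc ^^ n) h = h')) \<and>
     (\<forall>\<mu>\<in>V. m \<mu> \<ge> 1)"

definition valency :: "'h set \<Rightarrow> ('h \<Rightarrow> 'v) \<Rightarrow> 'v \<Rightarrow> nat" where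
  "valency H vt \<mu> = card {h\<in>H. vt h = \<mu>}"

definition truncated :: "'h set \<Rightarrow> ('h \<Rightarrow> 'v) \<Rightarrow> ('v \<Rightarrow> nat) \<Rightarrow> 'h \<Rightarrow> bool" where
  "truncated H vt m h \<longleftrightarrow> valency H vt (vt h) = 1 \<and> m (vt h) = 1"

record ('n, 'a) quiver =
  qverts :: "'n set"
  qarrows :: "'a set"
  qsrc :: "'a \<Rightarrow> 'n"
  qtgt :: "'a \<Rightarrow> 'n"

definition quiver_iso ::
  "('n, 'a) quiver \<Rightarrow> ('m, 'b) quiver \<Rightarrow> ('n \<Rightarrow> 'm) \<Rightarrow> ('a \<Rightarrow> 'b) \<Rightarrow> bool" where
  "quiver_iso Q Q' f0 f1 \<longleftrightarrow>
     bij_betw f0 (qverts Q) (qverts Q') \<and> bij_betw f1 (qarrows Q) (qarrows Q') \<and>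
     (\<forall>a\<in>qarrows Q. qsrc Q' (f1 a) = f0 (qsrc Q a) \<and> qtgt Q' (f1 a) = f0 (qtgt Q a))"

text \<open>The quiver of a Brauer graph: vertices are the edges; the arrow attached to
the non-truncated occurrence h (i = eo h at mu = vt h, with successor occurrence
sc h, j = eo (sc h)) is Some h : v_i \<rightarrow> v_j.  In the exceptional case of a single
non-loop edge with both endpoint multiplicities 1, there is one loop None.\<close>

definition brauer_quiver ::
  "'v set \<Rightarrow> 'e set \<Rightarrow> 'h set \<Rightarrow> ('h \<Rightarrow> 'e) \<Rightarrow> ('h \<Rightarrow> 'v) \<Rightarrow> ('h \<Rightarrow> 'h) \<Rightarrow> ('v \<Rightarrow> nat)
     \<Rightarrow> ('e, 'h option) quiver" where
  "brauer_quiver V E H eo vt sc m =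
     (if card E = 1 \<and> inj_on vt H \<and> (\<forall>h\<in>H. m (vt h) = 1)
      then \<lparr>qverts = E, qarrows = {None}, qsrc = (\<lambda>_. the_elem E), qtgt = (\<lambda>_. the_elem E)\<rparr>
      else \<lparr>qverts = E, qarrows = Some ` {h\<in>H. \<not> truncated H vt m h},
            qsrc = (\<lambda>a. eo (the a)), qtgt = (\<lambda>a. eo (sc (the a)))\<rparr>)"

definition group_act :: "('g, 'b) monoid_scheme \<Rightarrow> 'x set \<Rightarrow> ('g \<Rightarrow> 'x \<Rightarrow> 'x) \<Rightarrow> bool" where
  "group_act G X f \<longleftrightarrow>
     (\<forall>g\<in>carrier G. \<forall>x\<in>X. f g x \<in> X) \<and>
     (\<forall>x\<in>X. f \<one>\<^bsub>G\<^esub> x = x) \<and>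
     (\<forall>g\<in>carrier G. \<forall>g'\<in>carrier G. \<forall>x\<in>X. f (g \<otimes>\<^bsub>G\<^esub> g') x = f g (f g' x))"

definition orbit :: "('g, 'b) monoid_scheme \<Rightarrow> ('g \<Rightarrow> 'x \<Rightarrow> 'x) \<Rightarrow> 'x \<Rightarrow> 'x set" where
  "orbit G f x = (\<lambda>g. f g x) ` carrier G"

definition brauer_action ::
  "('g, 'b) monoid_scheme \<Rightarrow> 'v set \<Rightarrow> 'e set \<Rightarrow> 'h set \<Rightarrow> ('h \<Rightarrow> 'e) \<Rightarrow> ('h \<Rightarrow> 'v)
     \<Rightarrow> ('h \<Rightarrow> 'h) \<Rightarrow> ('v \<Rightarrow> nat)
     \<Rightarrow> ('g \<Rightarrow> 'v \<Rightarrow> 'v) \<Rightarrow> ('g \<Rightarrow> 'e \<Rightarrow> 'e) \<Rightarrow> ('g \<Rightarrow> 'h \<Rightarrow> 'h) \<Rightarrow> bool" where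
  "brauer_action G V E H eo vt sc m av ae ah \<longleftrightarrow>
     group_act G V av \<and> group_act G E ae \<and> group_act G H ah \<and>
     (\<forall>g\<in>carrier G. \<forall>h\<in>H. eo (ah g h) = ae g (eo h) \<and> vt (ah g h) = av g (vt h)) \<and>
     (\<forall>g\<in>carrier G. (\<forall>v\<in>V. av g v = v) \<and> (\<forall>e\<in>E. ae g e = e) \<longrightarrow> g = \<one>\<^bsub>G\<^esub>) \<and>
     (\<forall>g\<in>carrier G. \<forall>h\<in>H. sc (ah g h) = ah g (sc h)) \<and>
     (\<forall>g\<in>carrier G. \<forall>v\<in>V. m (av g v) = m v)"

definition free_brauer_action where
  "free_brauer_action G V E H eo vt sc m av ae ah \<longleftrightarrow>
     brauer_action G V E H eo vt sc m av ae ah \<and>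
     (\<forall>g\<in>carrier G. \<forall>e\<in>E. ae g e = e \<longrightarrow> g = \<one>\<^bsub>G\<^esub>)"

definition orbit_mult ::
  "('g, 'b) monoid_scheme \<Rightarrow> 'h set \<Rightarrow> ('h \<Rightarrow> 'v) \<Rightarrow> ('v \<Rightarrow> nat) \<Rightarrow> ('g \<Rightarrow> 'h \<Rightarrow> 'h)
     \<Rightarrow> 'v set \<Rightarrow> nat" where
  "orbit_mult G H vt m ah Y =
     (let \<mu> = (SOME \<mu>. \<mu> \<in> Y) in
        (valency H vt \<mu> * m \<mu>) div valency (orbit G ah ` H) (\<lambda>X. vt ` X) Y)"

definition orbit_quiver ::
  "('g, 'b) monoid_scheme \<Rightarrow> ('n, 'a) quiver \<Rightarrow> ('g \<Rightarrow> 'n \<Rightarrow> 'n) \<Rightarrow> ('g \<Rightarrow> 'a \<Rightarrow> 'a)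
     \<Rightarrow> ('n set, 'a set) quiver" where
  "orbit_quiver G Q an aa =
     \<lparr>qverts = orbit G an ` qverts Q, qarrows = orbit G aa ` qarrows Q,
      qsrc = (\<lambda>A. qsrc Q ` A), qtgt = (\<lambda>A. qtgt Q ` A)\<rparr>"

end

theory Submission
  imports Defs
begin

text \<open>
  Arrows of a Brauer quiver are indexed by non-truncated half-edges, so everything
  reduces to showing that the orbit of h is truncated in the orbit graph iff h is truncated.
  Writing a for the valency at vt h and b for the number of half-edge orbits at the orbit
  of vt h, the orbit multiplicity is a * m / b with 1 <= b <= a; hence the orbit of h is
  truncated (b = 1 and a * m / b = 1) iff a = 1 and m = 1.  The exceptional one-loop quiver
  arises exactly when all half-edges are truncated (by connectivity this forces a single
  edge), so both quivers fall into the same case of the definition.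
\<close>

locale set_action = group G for G :: "('g, 'b) monoid_scheme" (structure) +
  fixes X :: "'x set" and act :: "'g \<Rightarrow> 'x \<Rightarrow> 'x"
  assumes group_act: "group_act G X act"
begin

lemma act_closed: "g \<in> carrier G \<Longrightarrow> x \<in> X \<Longrightarrow> act g x \<in> X"
  using group_act by (simp add: group_act_def)

lemma act_one: "x \<in> X \<Longrightarrow> act \<one> x = x"
  using group_act by (simp add: group_act_def)

lemma act_mult: "g \<in> carrier G \<Longrightarrow> g' \<in> carrier G \<Longrightarrow> x \<in> X \<Longrightarrow> act (g \<otimes> g') x = act g (act g' x)"
  using group_act by (simp add: group_act_def)

lemma act_inv_cancel: "g \<in> carrier G \<Longrightarrow> x \<in> X \<Longrightarrow> act (inv g) (act g x) = x"
  by (simp add: act_mult[symmetric] act_one)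

lemma act_cancel_inv: "g \<in> carrier G \<Longrightarrow> x \<in> X \<Longrightarrow> act g (act (inv g) x) = x"
  by (simp add: act_mult[symmetric] act_one)

lemma orbit_self: "x \<in> X \<Longrightarrow> x \<in> orbit G act x"
  unfolding orbit_def by (rule image_eqI[of _ _ \<one>]) (simp_all add: act_one)

lemma orbit_subset: "x \<in> X \<Longrightarrow> orbit G act x \<subseteq> X"
  unfolding orbit_def by (auto simp: act_closed)

lemma orbit_sym:
  assumes x: "x \<in> X" and y: "y \<in> orbit G act x"
  shows "x \<in> orbit G act y"
proof -
  obtain g where g: "g \<in> carrier G" and y_eq: "y = act g x"
    using y unfolding orbit_def by auto
  have "x = act (inv g) y" using act_inv_cancel[OF g x] y_eq by simp
  then show ?thesis unfolding orbit_def using g by blast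
qed

lemma orbit_mono: "x \<in> X \<Longrightarrow> y \<in> orbit G act x \<Longrightarrow> orbit G act y \<subseteq> orbit G act x"
  unfolding orbit_def by (auto simp: act_mult[symmetric])

lemma orbit_eq: "x \<in> X \<Longrightarrow> y \<in> orbit G act x \<Longrightarrow> orbit G act y = orbit G act x"
  by (meson equalityI orbit_mono orbit_subset orbit_sym subsetD)

end

lemma inj_on_iff_valency_one: "inj_on vt H \<longleftrightarrow> (\<forall>h\<in>H. valency H vt (vt h) = 1)"
proof
  assume "inj_on vt H"
  then have "{k \<in> H. vt k = vt h} = {h}" if "h \<in> H" for h
    using that by (auto dest: inj_onD)
  then show "\<forall>h\<in>H. valency H vt (vt h) = 1" by (simp add: valency_def)
next
  assume one: "\<forall>h\<in>H. valency H vt (vt h) = 1"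
  show "inj_on vt H"
  proof (rule inj_onI)
    fix x y assume x: "x \<in> H" and y: "y \<in> H" and xy: "vt x = vt y"
    obtain z where z: "{k \<in> H. vt k = vt x} = {z}"
      using one x by (auto simp: valency_def card_1_singleton_iff)
    have "x \<in> {k \<in> H. vt k = vt x}" "y \<in> {k \<in> H. vt k = vt x}" using x y xy by auto
    then show "x = y" unfolding z by simp
  qed
qed

lemma all_truncated_iff:
  "(\<forall>h\<in>H. truncated H vt m h) \<longleftrightarrow> inj_on vt H \<and> (\<forall>h\<in>H. m (vt h) = 1)"
  by (auto simp: truncated_def inj_on_iff_valency_one)

lemma brauer_quiver_by_truncation:
  "brauer_quiver V E H eo vt sc m =
     (if card E = 1 \<and> (\<forall>h\<in>H. truncated H vt m h)
      then \<lparr>qverts = E, qarrows = {None}, qsrc = (\<lambda>_. the_elem E), qtgt = (\<lambda>_. the_elem E)\<rparr>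
      else \<lparr>qverts = E, qarrows = Some ` {h\<in>H. \<not> truncated H vt m h},
            qsrc = (\<lambda>a. eo (the a)), qtgt = (\<lambda>a. eo (sc (the a)))\<rparr>)"
  by (simp add: brauer_quiver_def all_truncated_iff conj_assoc)

lemma brauer_graph_edge_has_occurrence:
  assumes "brauer_graph V E H eo vt sc m" and "e \<in> E"
  obtains h where "h \<in> H" and "eo h = e"
proof -
  have "card {h \<in> H. eo h = e} = 2" using assms by (simp add: brauer_graph_def)
  then have "{h \<in> H. eo h = e} \<noteq> {}" by (metis card.empty zero_neq_numeral)
  then show ?thesis using that by blast
qed

text \<open>If no two half-edges share a vertex, a connected Brauer graph has a single edge: walking
  along adjacencies never leaves the edge one starts from.\<close>

lemma brauer_graph_single_edge:
  assumes bg: "brauer_graph V E H eo vt sc m" and inj: "inj_on vt H"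
  shows "card E = 1"
proof -
  obtain e0 where e0: "e0 \<in> E" using bg by (auto simp: brauer_graph_def)
  then obtain h0 where h0: "h0 \<in> H" "eo h0 = e0"
    using brauer_graph_edge_has_occurrence[OF bg] by blast
  have reach: "\<exists>k\<in>H. eo k = e0 \<and> vt k = y" if "(vt h0, y) \<in> (graph_adj H eo vt)\<^sup>*" for y
    using that
  proof (induction rule: rtrancl_induct)
    case base
    then show ?case using h0 by auto
  next
    case (step y z)
    then obtain k where k: "k \<in> H" "eo k = e0" "vt k = y" by auto
    from step.hyps(2) obtain a b where ab: "a \<in> H" "b \<in> H" "eo a = eo b" "y = vt a" "z = vt b"
      unfolding graph_adj_def by auto
    have "a = k" using inj_onD[OF inj] ab k by metis
    then show ?case using ab k by auto
  qed
  have "e = e0" if e: "e \<in> E" for e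
  proof -
    obtain k where k: "k \<in> H" "eo k = e" using brauer_graph_edge_has_occurrence[OF bg e] .
    have "(vt h0, vt k) \<in> (graph_adj H eo vt)\<^sup>*" using bg h0 k by (simp add: brauer_graph_def)
    then obtain k' where "k' \<in> H" "eo k' = e0" "vt k' = vt k" using reach by blast
    then show "e = e0" using inj_onD[OF inj] k by metis
  qed
  then have "E = {e0}" using e0 by blast
  then show ?thesis by simp
qed

text \<open>The arrow map on orbits: the orbit of the arrow Some h under the induced action is
  Some ` (orbit of h), which is sent to Some (orbit of h); the orbit of the exceptional loop
  None is sent to None.\<close>

definition orbit_arrow :: "'a option set \<Rightarrow> 'a set option" where
  "orbit_arrow A = (if None \<in> A then None else Some (the ` A))"

lemma orbit_arrow_Some_image [simp]: "orbit_arrow (Some ` A) = Some A"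
  by (auto simp: orbit_arrow_def image_image)

lemma orbit_arrow_None [simp]: "orbit_arrow {None} = None"
  by (simp add: orbit_arrow_def)

lemma orbit_map_option_Some: "orbit G (\<lambda>g. map_option (f g)) (Some x) = Some ` orbit G f x"
  by (simp add: orbit_def image_image)

lemma orbit_map_option_None: "carrier G \<noteq> {} \<Longrightarrow> orbit G (\<lambda>g. map_option (f g)) None = {None}"
  by (auto simp: orbit_def)

lemma orbit_arrow_orbit:
  "carrier G \<noteq> {} \<Longrightarrow> orbit_arrow (orbit G (\<lambda>g. map_option (f g)) a) = map_option (orbit G f) a"
  by (cases a) (simp_all add: orbit_map_option_Some orbit_map_option_None)

locale brauer_action_setting = group G for G :: "('g, 'b) monoid_scheme" (structure) +
  fixes V :: "'v set" and E :: "'e set" and H :: "'h set"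
    and eo :: "'h \<Rightarrow> 'e" and vt :: "'h \<Rightarrow> 'v" and sc :: "'h \<Rightarrow> 'h" and m :: "'v \<Rightarrow> nat"
    and av :: "'g \<Rightarrow> 'v \<Rightarrow> 'v" and ae :: "'g \<Rightarrow> 'e \<Rightarrow> 'e" and ah :: "'g \<Rightarrow> 'h \<Rightarrow> 'h"
  assumes graph: "brauer_graph V E H eo vt sc m"
    and action: "brauer_action G V E H eo vt sc m av ae ah"
begin

sublocale vert: set_action G V av
  using action by unfold_locales (simp add: brauer_action_def)

sublocale edge: set_action G E ae
  using action by unfold_locales (simp add: brauer_action_def)

sublocale half: set_action G H ah
  using action by unfold_locales (simp add: brauer_action_def)

lemma incidence: "h \<in> H \<Longrightarrow> eo h \<in> E \<and> vt h \<in> V"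
  using graph by (simp add: brauer_graph_def)

lemma act_compat: "g \<in> carrier G \<Longrightarrow> h \<in> H \<Longrightarrow> eo (ah g h) = ae g (eo h) \<and> vt (ah g h) = av g (vt h)"
  using action by (simp add: brauer_action_def)

lemma mult_invariant: "g \<in> carrier G \<Longrightarrow> v \<in> V \<Longrightarrow> m (av g v) = m v"
  using action by (simp add: brauer_action_def)

lemma vt_orbit: "h \<in> H \<Longrightarrow> vt ` orbit G ah h = orbit G av (vt h)"
  unfolding orbit_def image_image using act_compat by simp

text \<open>The action maps the half-edges at v bijectively onto those at g v, so valency is invariant.\<close>

lemma valency_invariant:
  assumes g: "g \<in> carrier G" and v: "v \<in> V"
  shows "valency H vt (av g v) = valency H vt v"
proof -
  have "bij_betw (ah g) {h \<in> H. vt h = v} {h \<in> H. vt h = av g v}"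
  proof (rule bij_betw_byWitness[where f' = "ah (inv g)"])
    show "\<forall>h\<in>{h \<in> H. vt h = v}. ah (inv g) (ah g h) = h"
      using g half.act_inv_cancel by auto
    show "\<forall>h\<in>{h \<in> H. vt h = av g v}. ah g (ah (inv g) h) = h"
      using g half.act_cancel_inv by auto
    show "ah g ` {h \<in> H. vt h = v} \<subseteq> {h \<in> H. vt h = av g v}"
      using g act_compat half.act_closed by auto
    show "ah (inv g) ` {h \<in> H. vt h = av g v} \<subseteq> {h \<in> H. vt h = v}"
      using g v act_compat half.act_closed vert.act_inv_cancel by auto
  qed
  then show ?thesis unfolding valency_def by (simp add: bij_betw_same_card)
qed

lemma orbit_fiber:
  assumes h: "h \<in> H"
  shows "{X \<in> orbit G ah ` H. vt ` X = orbit G av (vt h)} = orbit G ah ` {k \<in> H. vt k = vt h}"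
proof
  show "orbit G ah ` {k \<in> H. vt k = vt h} \<subseteq> {X \<in> orbit G ah ` H. vt ` X = orbit G av (vt h)}"
  proof
    fix X assume "X \<in> orbit G ah ` {k \<in> H. vt k = vt h}"
    then obtain k where "k \<in> H" "vt k = vt h" "X = orbit G ah k" by auto
    then show "X \<in> {X \<in> orbit G ah ` H. vt ` X = orbit G av (vt h)}" by (simp add: vt_orbit)
  qed
  show "{X \<in> orbit G ah ` H. vt ` X = orbit G av (vt h)} \<subseteq> orbit G ah ` {k \<in> H. vt k = vt h}"
  proof
    fix X assume "X \<in> {X \<in> orbit G ah ` H. vt ` X = orbit G av (vt h)}"
    then obtain k where k: "k \<in> H" and X: "X = orbit G ah k"
      and same_vertex_orbit: "orbit G av (vt k) = orbit G av (vt h)"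
      using vt_orbit by auto
    have "vt h \<in> orbit G av (vt k)"
      using same_vertex_orbit vert.orbit_self incidence h by auto
    then obtain g where g: "g \<in> carrier G" and vt_h: "vt h = av g (vt k)"
      unfolding orbit_def by auto
    have "ah g k \<in> {k \<in> H. vt k = vt h}"
      using half.act_closed act_compat g k vt_h by simp
    moreover have "orbit G ah (ah g k) = X"
      using half.orbit_eq[OF k] g X unfolding orbit_def by auto
    ultimately show "X \<in> orbit G ah ` {k \<in> H. vt k = vt h}" by blast
  qed
qed

lemma orbit_valency_bounds:
  assumes h: "h \<in> H"
  shows "1 \<le> valency (orbit G ah ` H) (\<lambda>X. vt ` X) (orbit G av (vt h))"
    and "valency (orbit G ah ` H) (\<lambda>X. vt ` X) (orbit G av (vt h)) \<le> valency H vt (vt h)"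
proof -
  have fin: "finite {k \<in> H. vt k = vt h}" using graph by (simp add: brauer_graph_def)
  have val: "valency (orbit G ah ` H) (\<lambda>X. vt ` X) (orbit G av (vt h))
      = card (orbit G ah ` {k \<in> H. vt k = vt h})"
    unfolding valency_def using orbit_fiber[OF h] by simp
  show "valency (orbit G ah ` H) (\<lambda>X. vt ` X) (orbit G av (vt h)) \<le> valency H vt (vt h)"
    using card_image_le[OF fin, of "orbit G ah"] val by (simp add: valency_def)
  show "1 \<le> valency (orbit G ah ` H) (\<lambda>X. vt ` X) (orbit G av (vt h))"
    unfolding val using fin h by (auto simp: Suc_le_eq card_gt_0_iff)
qed

text \<open>The orbit multiplicity does not depend on the chosen representative, since valency and
  multiplicity are invariant.\<close>

lemma orbit_mult_orbit:
  assumes h: "h \<in> H"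
  shows "orbit_mult G H vt m ah (orbit G av (vt h)) =
     valency H vt (vt h) * m (vt h) div valency (orbit G ah ` H) (\<lambda>X. vt ` X) (orbit G av (vt h))"
proof -
  define \<mu> where "\<mu> = (SOME \<mu>. \<mu> \<in> orbit G av (vt h))"
  have "\<mu> \<in> orbit G av (vt h)"
    unfolding \<mu>_def by (rule someI[of _ "vt h"]) (use vert.orbit_self incidence h in auto)
  then obtain g where g: "g \<in> carrier G" and \<mu>: "\<mu> = av g (vt h)"
    unfolding orbit_def by auto
  have "valency H vt \<mu> = valency H vt (vt h)" and "m \<mu> = m (vt h)"
    using g \<mu> valency_invariant mult_invariant incidence h by auto
  then show ?thesis unfolding orbit_mult_def Let_def \<mu>_def[symmetric] by simp
qed

text \<open>Key step: the orbit of h is truncated in the orbit graph iff h is truncated, because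
  b = 1 and a * m div b = 1 together are equivalent to a = 1 and m = 1 when 1 <= b <= a.\<close>

lemma truncated_orbit_iff:
  assumes h: "h \<in> H"
  shows "truncated (orbit G ah ` H) (\<lambda>X. vt ` X) (orbit_mult G H vt m ah) (orbit G ah h)
    \<longleftrightarrow> truncated H vt m h"
proof -
  define a where "a = valency H vt (vt h)"
  define b where "b = valency (orbit G ah ` H) (\<lambda>X. vt ` X) (orbit G av (vt h))"
  have "1 \<le> b" "b \<le> a" using orbit_valency_bounds[OF h] unfolding a_def b_def by auto
  have "truncated (orbit G ah ` H) (\<lambda>X. vt ` X) (orbit_mult G H vt m ah) (orbit G ah h)
      \<longleftrightarrow> b = 1 \<and> a * m (vt h) div b = 1"
    unfolding truncated_def vt_orbit[OF h] orbit_mult_orbit[OF h] a_def b_def by simp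
  also have "\<dots> \<longleftrightarrow> a = 1 \<and> m (vt h) = 1" using \<open>1 \<le> b\<close> \<open>b \<le> a\<close> by auto
  finally show ?thesis unfolding truncated_def a_def .
qed

lemma orbit_graph_exceptional_iff:
  "card (orbit G ae ` E) = 1 \<and>
     (\<forall>X\<in>orbit G ah ` H. truncated (orbit G ah ` H) (\<lambda>X. vt ` X) (orbit_mult G H vt m ah) X)
   \<longleftrightarrow> card E = 1 \<and> (\<forall>h\<in>H. truncated H vt m h)"
proof -
  have all_truncated_single: "card E = 1" if "\<forall>h\<in>H. truncated H vt m h"
    using brauer_graph_single_edge[OF graph] that all_truncated_iff by blast
  have "card (orbit G ae ` E) = 1" if "card E = 1"
    using that by (auto simp: card_1_singleton_iff)
  then show ?thesis using all_truncated_single truncated_orbit_iff by auto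
qed

lemma orbit_quiver_iso_exceptional:
  assumes exceptional: "card E = 1 \<and> (\<forall>h\<in>H. truncated H vt m h)"
  shows "quiver_iso
      (orbit_quiver G (brauer_quiver V E H eo vt sc m) ae (\<lambda>g. map_option (ah g)))
      (brauer_quiver (orbit G av ` V) (orbit G ae ` E) (orbit G ah ` H)
         (\<lambda>X. eo ` X) (\<lambda>X. vt ` X) (\<lambda>X. sc ` X) (orbit_mult G H vt m ah))
      id orbit_arrow"
proof -
  obtain e where E: "E = {e}" using exceptional by (auto simp: card_1_singleton_iff)
  have orbit_e: "orbit G ae e = {e}" using edge.orbit_subset edge.orbit_self E by blast
  have exceptional': "card (orbit G ae ` E) = 1 \<and>
     (\<forall>X\<in>orbit G ah ` H. truncated (orbit G ah ` H) (\<lambda>X. vt ` X) (orbit_mult G H vt m ah) X)"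
    using exceptional orbit_graph_exceptional_iff by blast
  show ?thesis
    unfolding brauer_quiver_by_truncation if_P[OF exceptional] if_P[OF exceptional']
    using E orbit_e
    by (simp add: quiver_iso_def orbit_quiver_def bij_betw_def orbit_map_option_None[OF carrier_not_empty])
qed

lemma orbit_quiver_iso_regular:
  assumes regular: "\<not> (card E = 1 \<and> (\<forall>h\<in>H. truncated H vt m h))"
  shows "quiver_iso
      (orbit_quiver G (brauer_quiver V E H eo vt sc m) ae (\<lambda>g. map_option (ah g)))
      (brauer_quiver (orbit G av ` V) (orbit G ae ` E) (orbit G ah ` H)
         (\<lambda>X. eo ` X) (\<lambda>X. vt ` X) (\<lambda>X. sc ` X) (orbit_mult G H vt m ah))
      id orbit_arrow"
proof -
  define N where "N = {h \<in> H. \<not> truncated H vt m h}"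
  have regular': "\<not> (card (orbit G ae ` E) = 1 \<and>
     (\<forall>X\<in>orbit G ah ` H. truncated (orbit G ah ` H) (\<lambda>X. vt ` X) (orbit_mult G H vt m ah) X))"
    using regular orbit_graph_exceptional_iff by blast
  have arrows': "{X \<in> orbit G ah ` H. \<not> truncated (orbit G ah ` H) (\<lambda>X. vt ` X) (orbit_mult G H vt m ah) X}
      = orbit G ah ` N"
    unfolding N_def using truncated_orbit_iff by auto
  have "bij_betw orbit_arrow ((\<lambda>h. Some ` orbit G ah h) ` N) (Some ` orbit G ah ` N)"
    by (auto simp: bij_betw_def inj_on_def image_image)
  then show ?thesis
    unfolding brauer_quiver_by_truncation if_not_P[OF regular] if_not_P[OF regular'] arrows'
    by (simp add: quiver_iso_def orbit_quiver_def orbit_map_option_Some N_def[symmetric] image_image)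
qed

lemma orbit_quiver_iso:
  "quiver_iso
      (orbit_quiver G (brauer_quiver V E H eo vt sc m) ae (\<lambda>g. map_option (ah g)))
      (brauer_quiver (orbit G av ` V) (orbit G ae ` E) (orbit G ah ` H)
         (\<lambda>X. eo ` X) (\<lambda>X. vt ` X) (\<lambda>X. sc ` X) (orbit_mult G H vt m ah))
      id orbit_arrow"
  using orbit_quiver_iso_exceptional orbit_quiver_iso_regular by blast

end

theorem proposition2p8:
  fixes G :: "('g, 'b) monoid_scheme"
    and V :: "'v set" and E :: "'e set" and H :: "'h set"
    and eo :: "'h \<Rightarrow> 'e" and vt :: "'h \<Rightarrow> 'v" and sc :: "'h \<Rightarrow> 'h" and m :: "'v \<Rightarrow> nat"
    and av :: "'g \<Rightarrow> 'v \<Rightarrow> 'v" and ae :: "'g \<Rightarrow> 'e \<Rightarrow> 'e" and ah :: "'g \<Rightarrow> 'h \<Rightarrow> 'h"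
  assumes "comm_group G" and "finite (carrier G)"
    and "brauer_graph V E H eo vt sc m"
    and "free_brauer_action G V E H eo vt sc m av ae ah"
  shows "\<exists>f0 f1.
    quiver_iso
      (orbit_quiver G (brauer_quiver V E H eo vt sc m) ae (\<lambda>g. map_option (ah g)))
      (brauer_quiver (orbit G av ` V) (orbit G ae ` E) (orbit G ah ` H)
         (\<lambda>X. eo ` X) (\<lambda>X. vt ` X) (\<lambda>X. sc ` X) (orbit_mult G H vt m ah))
      f0 f1 \<and>
    (\<forall>e\<in>E. f0 (orbit G ae e) = orbit G ae e) \<and>
    (\<forall>a\<in>qarrows (brauer_quiver V E H eo vt sc m).
        f1 (orbit G (\<lambda>g. map_option (ah g)) a) = map_option (orbit G ah) a)"
proof -
  have "group G" using assms(1) by (rule comm_group.axioms(2))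
  then interpret brauer_action_setting G V E H eo vt sc m av ae ah
    using assms(3,4)
    by (simp add: brauer_action_setting_def brauer_action_setting_axioms_def free_brauer_action_def)
  show ?thesis
    using orbit_quiver_iso
    by (intro exI[of _ id] exI[of _ orbit_arrow]) (simp add: orbit_arrow_orbit[OF carrier_not_empty])
qed

end
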